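(* Let $\phi:\mathbb{R}\to\mathbb{R}$ be smooth with $\phi(x)\to 0$ as $|x|\to\infty$, and consider the equation $$\frac{\partial u(t,x)}{\partial t}=\frac{\partial^2 u(t,x)}{\partial x^2}-u^2(t,x)+\phi(x),\qquad t,x\in\mathbb{R}. \quad (\ast)$$ Suppose $f_+,f_-$ are equilibrium solutions of $(\ast)$ (i.e. $0=f_\pm''-f_\pm^2+\phi$) such that: (1) $f_+,f_-$ are smooth and bounded; (2) $f_+,f_-$ have bounded first and second derivatives; (3) $f_+,f_-$ are asymptotic to $6/x^2$ for large $x$, so both lie in $L^1(\mathbb{R})$; (4) $f_+(x)>f_-(x)$ for all $x$; (5) there is no equilibrium solution $f_2$ of $(\ast)$ with $f_+(x)>f_2(x)>f_-(x)$ for all $x$. Suppose moreover $f_-\in C^{2,\alpha}(\mathbb{R})$ and there is a compact set $K\subset\mathbb{R}$ with nonempty interior such that $f_-$ is negative on the interior of $K$ and nonnegative on $\mathbb{R}\setminus K$. Then there exists a one-parameter family of functions $g_c$ and $\phi_c$, $c\in[0,1)$, with $0=g_c''(x)-g_c^2(x)+\phi_c(x)$ for all $x$, such that $g_0=f_-$, $\phi_0=\phi$, and for $a>b$ one has $\phi_a(x)<\phi_b(x)$ and $g_a(x)>g_b(x)$ for all $x$.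
   Context: An equilibrium solution of $(\ast)$ is a time-independent solution $f(x)$, i.e. $f''-f^2+\phi=0$. $C^{2,\alpha}(\mathbb{R})$ denotes the Hölder space of twice differentiable functions with $\alpha$-Hölder continuous second derivative. *)

theory Defs
  imports "HOL-Analysis.Analysis" "HOL-Library.Landau_Symbols"
begin

definition smooth_real :: "(real \<Rightarrow> real) \<Rightarrow> bool" where
  "smooth_real f \<longleftrightarrow> (\<forall>n x. ((deriv ^^ n) f) differentiable (at x))"

definition twice_diff :: "(real \<Rightarrow> real) \<Rightarrow> bool" where
  "twice_diff f \<longleftrightarrow> (\<forall>x. f differentiable (at x) \<and> deriv f differentiable (at x))"

definition equilibrium :: "(real \<Rightarrow> real) \<Rightarrow> (real \<Rightarrow> real) \<Rightarrow> bool" where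
  "equilibrium phi f \<longleftrightarrow> twice_diff f \<and> (\<forall>x. deriv (deriv f) x - (f x)^2 + phi x = 0)"

definition C2_alpha :: "real \<Rightarrow> (real \<Rightarrow> real) \<Rightarrow> bool" where
  "C2_alpha \<alpha> f \<longleftrightarrow> twice_diff f \<and>
     (\<exists>M. \<forall>x y. \<bar>deriv (deriv f) x - deriv (deriv f) y\<bar> \<le> M * \<bar>x - y\<bar> powr \<alpha>)"

end

theory Submission
  imports Defs
begin

text \<open>The nonlinearity is quadratic, so a convex combination
  \<open>g = (1 - s) f\<^sub>- + s f\<^sub>+\<close> of two equilibria of \<open>\<phi>\<close> is an equilibrium of
  \<open>\<phi> - s (1 - s) (f\<^sub>+ - f\<^sub>-)\<^sup>2\<close>. With \<open>s = c/2\<close>, the weight \<open>s (1 - s)\<close> is strictly increasing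
  for \<open>c \<in> [0, 1)\<close>, and \<open>f\<^sub>+ > f\<^sub>-\<close> makes both the forcing terms strictly decreasing and the
  equilibria strictly increasing in \<open>c\<close>.\<close>

lemma deriv_lincomb:
  fixes f h :: "real \<Rightarrow> real"
  assumes "\<And>x. f differentiable (at x)" "\<And>x. h differentiable (at x)"
  shows "deriv (\<lambda>x. u * f x + v * h x) = (\<lambda>x. u * deriv f x + v * deriv h x)"
proof
  fix x
  have "(f has_real_derivative deriv f x) (at x)" "(h has_real_derivative deriv h x) (at x)"
    using assms by (auto simp: DERIV_deriv_iff_real_differentiable)
  then have "((\<lambda>x. u * f x + v * h x) has_real_derivative u * deriv f x + v * deriv h x) (at x)"
    by (auto intro!: derivative_eq_intros)
  then show "deriv (\<lambda>x. u * f x + v * h x) x = u * deriv f x + v * deriv h x"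
    by (rule DERIV_imp_deriv)
qed

lemma twice_diff_lincomb:
  fixes f h :: "real \<Rightarrow> real"
  assumes "twice_diff f" "twice_diff h"
  shows "twice_diff (\<lambda>x. u * f x + v * h x)"
    and "deriv (deriv (\<lambda>x. u * f x + v * h x)) = (\<lambda>x. u * deriv (deriv f) x + v * deriv (deriv h) x)"
proof -
  have d: "deriv (\<lambda>x. u * f x + v * h x) = (\<lambda>x. u * deriv f x + v * deriv h x)"
    using assms unfolding twice_diff_def by (intro deriv_lincomb) auto
  show "twice_diff (\<lambda>x. u * f x + v * h x)"
    using assms unfolding twice_diff_def d by (auto intro!: derivative_intros)
  show "deriv (deriv (\<lambda>x. u * f x + v * h x)) = (\<lambda>x. u * deriv (deriv f) x + v * deriv (deriv h) x)"
    using assms unfolding d twice_diff_def by (intro deriv_lincomb) auto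
qed

lemma equilibrium_convex_combination:
  assumes f: "equilibrium \<phi> f" and h: "equilibrium \<phi> h"
  shows "equilibrium (\<lambda>x. \<phi> x - s * (1 - s) * (h x - f x)\<^sup>2) (\<lambda>x. (1 - s) * f x + s * h x)"
proof -
  have tf: "twice_diff f" and th: "twice_diff h"
    and ef: "\<And>x. deriv (deriv f) x = (f x)\<^sup>2 - \<phi> x"
    and eh: "\<And>x. deriv (deriv h) x = (h x)\<^sup>2 - \<phi> x"
    using f h unfolding equilibrium_def by (auto simp: algebra_simps)
  have "deriv (deriv (\<lambda>x. (1 - s) * f x + s * h x)) x - ((1 - s) * f x + s * h x)\<^sup>2
      + (\<phi> x - s * (1 - s) * (h x - f x)\<^sup>2) = 0" for x
    unfolding twice_diff_lincomb(2)[OF tf th] ef eh by (simp add: algebra_simps power2_eq_square)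
  then show ?thesis
    unfolding equilibrium_def using twice_diff_lincomb(1)[OF tf th] by blast
qed

lemma convex_weight_strict_mono:
  fixes a b :: real
  assumes "b < a" "a + b < 2"
  shows "b/2 * (1 - b/2) < a/2 * (1 - a/2)"
proof -
  have "a/2 * (1 - a/2) - b/2 * (1 - b/2) = (a - b) * (2 - a - b) / 4"
    by (simp add: algebra_simps power2_eq_square)
  moreover have "(a - b) * (2 - a - b) > 0"
    using assms by (intro mult_pos_pos) auto
  ultimately show ?thesis by linarith
qed

theorem mainTheorem1:
  fixes \<phi> fp fm :: "real \<Rightarrow> real" and K :: "real set"
  assumes phi_smooth: "smooth_real \<phi>"
    and phi_decay: "(\<phi> \<longlongrightarrow> 0) at_infinity"
    and eq_p: "equilibrium \<phi> fp" and eq_m: "equilibrium \<phi> fm"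
    and smooth_p: "smooth_real fp" and smooth_m: "smooth_real fm"
    and bdd_p: "bounded (range fp)" "bounded (range (deriv fp))" "bounded (range (deriv (deriv fp)))"
    and bdd_m: "bounded (range fm)" "bounded (range (deriv fm))" "bounded (range (deriv (deriv fm)))"
    and asym_p: "fp \<sim>[at_infinity] (\<lambda>x. 6 / x\<^sup>2)"
    and asym_m: "fm \<sim>[at_infinity] (\<lambda>x. 6 / x\<^sup>2)"
    and L1: "integrable lborel fp" "integrable lborel fm"
    and order: "\<forall>x. fp x > fm x"
    and no_between: "\<not> (\<exists>f2. equilibrium \<phi> f2 \<and> (\<forall>x. fp x > f2 x \<and> f2 x > fm x))"
    and hoelder: "\<exists>\<alpha>. 0 < \<alpha> \<and> \<alpha> \<le> 1 \<and> C2_alpha \<alpha> fm"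
    and K: "compact K" "interior K \<noteq> {}"
    and neg: "\<forall>x\<in>interior K. fm x < 0"
    and nonneg: "\<forall>x. x \<notin> K \<longrightarrow> fm x \<ge> 0"
  shows "\<exists>g \<phi>c :: real \<Rightarrow> real \<Rightarrow> real.
           (\<forall>c\<in>{0..<1}. equilibrium (\<phi>c c) (g c)) \<and>
           g 0 = fm \<and> \<phi>c 0 = \<phi> \<and>
           (\<forall>a\<in>{0..<1}. \<forall>b\<in>{0..<1}. a > b \<longrightarrow>
              (\<forall>x. \<phi>c a x < \<phi>c b x \<and> g a x > g b x))"
proof -
  define g where "g c = (\<lambda>x. (1 - c/2) * fm x + c/2 * fp x)" for c :: real
  define \<phi>c where "\<phi>c c = (\<lambda>x. \<phi> x - c/2 * (1 - c/2) * (fp x - fm x)\<^sup>2)" for c :: real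
  have equilibria: "equilibrium (\<phi>c c) (g c)" for c
    unfolding g_def \<phi>c_def by (rule equilibrium_convex_combination[OF eq_m eq_p])
  have strict_mono: "\<phi>c a x < \<phi>c b x \<and> g a x > g b x"
    if "a \<in> {0..<1}" "b \<in> {0..<1}" "a > b" for a b x
  proof -
    have gap: "fp x - fm x > 0" using order by auto
    have "b/2 * (1 - b/2) * (fp x - fm x)\<^sup>2 < a/2 * (1 - a/2) * (fp x - fm x)\<^sup>2"
      using that gap by (intro mult_strict_right_mono convex_weight_strict_mono) auto
    moreover have "g a x - g b x = (a - b) / 2 * (fp x - fm x)"
      unfolding g_def by (simp add: algebra_simps)
    moreover have "(a - b) / 2 * (fp x - fm x) > 0"
      using that gap by simp
    ultimately show ?thesis unfolding \<phi>c_def by simp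
  qed
  have "g 0 = fm" "\<phi>c 0 = \<phi>" unfolding g_def \<phi>c_def by auto
  with equilibria strict_mono show ?thesis by (intro exI[of _ g] exI[of _ \<phi>c]) auto
qed

end
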